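(* Let $P(t)=\sum_{i=0}^d\binom{t+i}{i+1}-\binom{t+i-e_i}{i+1}$ with integers $e_0\ge e_1\ge\dots\ge e_d>0$, and let $n\in\mathbb{N}$ with $n>d=\deg P$. (i) Set $e_i:=0$ for $d+1\le i\le n$ and $a_j:=e_j-e_{j+1}$ for $0\le j\le n-1$. Then $L^P_n=L(a_0,\dots,a_{n-1})=\langle x_0,x_1,\dots,x_{n-(d+2)},\ x_{n-(d+1)}^{a_d+1},\ x_{n-(d+1)}^{a_d}x_{n-d}^{a_{d-1}+1},\ \dots,\ x_{n-(d+1)}^{a_d}x_{n-d}^{a_{d-1}}\cdots x_{n-3}^{a_2}x_{n-2}^{a_1+1},\ x_{n-(d+1)}^{a_d}x_{n-d}^{a_{d-1}}\cdots x_{n-2}^{a_1}x_{n-1}^{a_0}\rangle$. (ii) If there is an integer $0\le\ell\le d-1$ with $a_j=0$ for all $j\le\ell$ and $a_{\ell+1}>0$, then the minimal monomial generators of $L^P_n$ are $m_1,\dots,m_{n-(\ell+1)}$, where $m_i:=x_{i-1}$ for $1\le i\le n-(d+1)$, $m_{n-d+k}:=\big(\prod_{j=0}^{k-1}x_{n-(d+1)+j}^{a_{d-j}}\big)x_{n-(d+1)+k}^{a_{d-k}+1}$ for $0\le k\le d-(\ell+2)$, and $m_{n-(\ell+1)}:=\prod_{j=0}^{d-(\ell+1)}x_{n-(d+1)+j}^{a_{d-j}}$. If $a_0\ne0$, then the minimal monomial generators are those listed in (i).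
   Context: $\Bbbk$ is an algebraically closed field and $\Bbbk[x_0,\dots,x_n]$ the standard graded polynomial ring. Binomial coefficients are polynomials: $\binom{t+a}{b}=\frac{(t+a)\cdots(t+a-b+1)}{b!}$ for $b\ge0$, $0$ for $b<0$. For $a_0,\dots,a_{n-1}\in\mathbb{N}$, $L(a_0,\dots,a_{n-1})$ is the monomial ideal generated by $x_0^{a_{n-1}+1},\ x_0^{a_{n-1}}x_1^{a_{n-2}+1},\ \dots,\ x_0^{a_{n-1}}\cdots x_{n-3}^{a_2}x_{n-2}^{a_1+1},\ x_0^{a_{n-1}}\cdots x_{n-2}^{a_1}x_{n-1}^{a_0}$. Lexicographic order: $x^u>x^v$ if the first nonzero coordinate of $u-v$ is positive. For a homogeneous ideal $I$ with Hilbert function $H$ (of the quotient), $L^H_n$ is the monomial ideal whose degree-$i$ piece is spanned by the $\dim_\Bbbk I_i$ lexicographically largest monomials of degree $i$; the lexicographic ideal $L^P_n$ is the saturation $\bigcup_{j\ge1}\{f: f\langle x_0,\dots,x_n\rangle^j\subseteq L^{H_I}_n\}$ for any homogeneous ideal $I$ whose Hilbert polynomial is $P$ (this is independent of the choice of $I$). *)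

theory Defs
  imports "HOL-Library.Poly_Mapping" "HOL-Computational_Algebra.Polynomial"
begin

text \<open>Monomials in the variables x_0, x_1, ... are exponent vectors nat =>0 nat;
  polynomials over a field 'k are finitely supported maps from monomials to 'k
  (with the convolution product of Poly_Mapping).\<close>

type_synonym mono = "nat \<Rightarrow>\<^sub>0 nat"
type_synonym 'k mpoly = "mono \<Rightarrow>\<^sub>0 'k"

definition in_vars :: "nat \<Rightarrow> mono \<Rightarrow> bool" where
  "in_vars n m \<longleftrightarrow> Poly_Mapping.keys m \<subseteq> {..n}"

definition mdeg :: "mono \<Rightarrow> nat" where
  "mdeg m = (\<Sum>i\<in>Poly_Mapping.keys m. Poly_Mapping.lookup m i)"

definition pring :: "nat \<Rightarrow> 'k::comm_ring_1 mpoly set" where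
  "pring n = {p. \<forall>m\<in>Poly_Mapping.keys p. in_vars n m}"

definition mon :: "mono \<Rightarrow> 'k::comm_ring_1 mpoly" where
  "mon m = Poly_Mapping.single m 1"

definition smul :: "'k::comm_ring_1 \<Rightarrow> 'k mpoly \<Rightarrow> 'k mpoly" where
  "smul c p = Poly_Mapping.single 0 c * p"

definition is_ideal :: "nat \<Rightarrow> 'k::comm_ring_1 mpoly set \<Rightarrow> bool" where
  "is_ideal n I \<longleftrightarrow> I \<subseteq> pring n \<and> 0 \<in> I \<and> (\<forall>p\<in>I. \<forall>q\<in>I. p + q \<in> I)
     \<and> (\<forall>p\<in>I. \<forall>r\<in>pring n. r * p \<in> I)"

definition hcomp :: "nat \<Rightarrow> 'k::comm_ring_1 mpoly \<Rightarrow> 'k mpoly" where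
  "hcomp i p = (\<Sum>m\<in>{m\<in>Poly_Mapping.keys p. mdeg m = i}. Poly_Mapping.single m (Poly_Mapping.lookup p m))"

definition homogeneous_ideal :: "nat \<Rightarrow> 'k::comm_ring_1 mpoly set \<Rightarrow> bool" where
  "homogeneous_ideal n I \<longleftrightarrow> is_ideal n I \<and> (\<forall>p\<in>I. \<forall>i. hcomp i p \<in> I)"

definition gen_ideal :: "nat \<Rightarrow> 'k::comm_ring_1 mpoly set \<Rightarrow> 'k mpoly set" where
  "gen_ideal n G = \<Inter>{J. is_ideal n J \<and> G \<subseteq> J}"

definition piece :: "'k::comm_ring_1 mpoly set \<Rightarrow> nat \<Rightarrow> 'k mpoly set" where
  "piece I i = {p\<in>I. \<forall>m\<in>Poly_Mapping.keys p. mdeg m = i}"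

definition lin_indep :: "'k::field mpoly set \<Rightarrow> bool" where
  "lin_indep S \<longleftrightarrow> (\<forall>c. (\<Sum>p\<in>S. smul (c p) p) = 0 \<longrightarrow> (\<forall>p\<in>S. c p = 0))"

definition dimI :: "'k::field mpoly set \<Rightarrow> nat \<Rightarrow> nat" where
  "dimI I i = Sup {card S | S. finite S \<and> S \<subseteq> piece I i \<and> lin_indep S}"

definition nmon :: "nat \<Rightarrow> nat \<Rightarrow> nat" where
  "nmon n i = card {m. in_vars n m \<and> mdeg m = i}"

definition hilb :: "nat \<Rightarrow> 'k::field mpoly set \<Rightarrow> nat \<Rightarrow> nat" where
  "hilb n I i = nmon n i - dimI I i"

definition has_hilb_poly :: "nat \<Rightarrow> 'k::field mpoly set \<Rightarrow> (nat \<Rightarrow> rat) \<Rightarrow> bool" where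
  "has_hilb_poly n I P \<longleftrightarrow> (\<exists>t0. \<forall>t\<ge>t0. of_nat (hilb n I t) = P t)"

definition hilbP :: "nat \<Rightarrow> (nat \<Rightarrow> int) \<Rightarrow> nat \<Rightarrow> rat" where
  "hilbP d e t = (\<Sum>i\<le>d. ((of_nat t + of_nat i) gchoose (i+1))
                     - ((of_nat t + of_nat i - of_int (e i)) gchoose (i+1)))"

definition lex_gt :: "mono \<Rightarrow> mono \<Rightarrow> bool" where
  "lex_gt u v \<longleftrightarrow> (\<exists>j. Poly_Mapping.lookup v j < Poly_Mapping.lookup u j \<and> (\<forall>i<j. Poly_Mapping.lookup u i = Poly_Mapping.lookup v i))"

definition toplex :: "nat \<Rightarrow> nat \<Rightarrow> nat \<Rightarrow> mono set" where
  "toplex n i k = {m. in_vars n m \<and> mdeg m = i \<and>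
      card {m'. in_vars n m' \<and> mdeg m' = i \<and> lex_gt m' m} < k}"

definition lexH :: "nat \<Rightarrow> 'k::field mpoly set \<Rightarrow> 'k mpoly set" where
  "lexH n I = {p\<in>pring n. \<forall>m\<in>Poly_Mapping.keys p. m \<in> toplex n (mdeg m) (dimI I (mdeg m))}"

text \<open>saturation w.r.t. <x_0..x_n>; <x_0..x_n>^j = polynomials with all monomials of degree >= j\<close>
definition saturation :: "nat \<Rightarrow> 'k::comm_ring_1 mpoly set \<Rightarrow> 'k mpoly set" where
  "saturation n L = {f\<in>pring n. \<exists>j\<ge>1. \<forall>g\<in>pring n. (\<forall>m\<in>Poly_Mapping.keys g. j \<le> mdeg m) \<longrightarrow> f * g \<in> L}"

text \<open>L^P_n (well defined: independent of the homogeneous ideal I with Hilbert polynomial P)\<close>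
definition lex_ideal :: "nat \<Rightarrow> (nat \<Rightarrow> rat) \<Rightarrow> 'k::field mpoly set" where
  "lex_ideal n P = (THE L. \<exists>I. homogeneous_ideal n I \<and> has_hilb_poly n I P
                             \<and> L = saturation n (lexH n I))"

definition Lgen :: "nat \<Rightarrow> (nat \<Rightarrow> nat) \<Rightarrow> nat \<Rightarrow> mono" where
  "Lgen n a k = (\<Sum>j<k. Poly_Mapping.single j (a (n - 1 - j)))
       + Poly_Mapping.single k (a (n - 1 - k) + (if k < n - 1 then 1 else 0))"

definition Lideal :: "nat \<Rightarrow> (nat \<Rightarrow> nat) \<Rightarrow> 'k::comm_ring_1 mpoly set" where
  "Lideal n a = gen_ideal n (mon ` {Lgen n a k | k. k < n})"

definition mdvd :: "mono \<Rightarrow> mono \<Rightarrow> bool" where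
  "mdvd u v \<longleftrightarrow> (\<forall>i. Poly_Mapping.lookup u i \<le> Poly_Mapping.lookup v i)"

definition mingens :: "nat \<Rightarrow> 'k::comm_ring_1 mpoly set \<Rightarrow> mono set" where
  "mingens n J = {m. in_vars n m \<and> mon m \<in> J \<and>
                     (\<forall>m'. in_vars n m' \<and> mon m' \<in> J \<and> mdvd m' m \<longrightarrow> m' = m)}"

definition Egen :: "nat \<Rightarrow> nat \<Rightarrow> (nat \<Rightarrow> nat) \<Rightarrow> nat \<Rightarrow> mono" where
  "Egen n d a k = (\<Sum>j<k. Poly_Mapping.single (n - (d+1) + j) (a (d - j)))
       + Poly_Mapping.single (n - (d+1) + k) (a (d - k) + (if k < d then 1 else 0))"

definition gens_i :: "nat \<Rightarrow> nat \<Rightarrow> (nat \<Rightarrow> nat) \<Rightarrow> mono set" where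
  "gens_i n d a = {Poly_Mapping.single i 1 | i. i + d + 2 \<le> n} \<union> {Egen n d a k | k. k \<le> d}"

definition gens_ii :: "nat \<Rightarrow> nat \<Rightarrow> (nat \<Rightarrow> nat) \<Rightarrow> nat \<Rightarrow> mono set" where
  "gens_ii n d a l = {Poly_Mapping.single i 1 | i. i + d + 2 \<le> n}
     \<union> {Egen n d a k | k. k + l + 2 \<le> d}
     \<union> {(\<Sum>j\<le>d - (l+1). Poly_Mapping.single (n - (d+1) + j) (a (d - j)))}"

end

(*
  Let G be the generators listed in (i) and M the monomials divisible by one of them.
  G is lex-stable (a generator g and a position j always admit a generator that
  agrees with g before x_j, exceeds it by at most one at x_j and stops there), hence
  M is a lexicographic segment in every degree; it is saturated because no generator
  involves x_n.  The monomials outside M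
  live in the last d + 2 variables; splitting off the exponent of the first one gives
  a recursion whose solution, after telescoping binomial sums, is P(t) for
  t >= a_0 + ... + a_d.  The saturation of L^{H_I}_n only depends on H_I in large
  degrees, so for every I with Hilbert polynomial P it is the monomial ideal spanned
  by M.  The minimal generators then follow from a divisibility analysis of G: the
  only divisibility among distinct generators is the last staircase generator
  dividing an earlier one, which happens exactly when the a_j in between vanish.
*)

theory Submission
  imports Defs "HOL-Library.FuncSet"
begin

abbreviation lookup :: "('a \<Rightarrow>\<^sub>0 'b::zero) \<Rightarrow> 'a \<Rightarrow> 'b"
  where "lookup \<equiv> Poly_Mapping.lookup"

abbreviation keys :: "('a \<Rightarrow>\<^sub>0 'b::zero) \<Rightarrow> 'a set"
  where "keys \<equiv> Poly_Mapping.keys"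

abbreviation single :: "'a \<Rightarrow> 'b::zero \<Rightarrow> 'a \<Rightarrow>\<^sub>0 'b"
  where "single \<equiv> Poly_Mapping.single"

lemma lookup_minus_mono: "lookup (u - v :: mono) i = lookup u i - lookup v i"
  by (simp add: minus_poly_mapping.rep_eq)

lemma lookup_single_if: "lookup (single i b) j = (if j = i then b else 0)"
  by (simp add: lookup_single when_def)

lemma mdeg_eq_sum: "finite A \<Longrightarrow> keys m \<subseteq> A \<Longrightarrow> mdeg m = (\<Sum>i\<in>A. lookup m i)"
  unfolding mdeg_def by (rule sum.mono_neutral_left) (auto simp: in_keys_iff)

lemma mdeg_add: "mdeg (u + v) = mdeg u + mdeg v"
proof -
  let ?A = "keys u \<union> keys v"
  have "mdeg (u + v) = (\<Sum>i\<in>?A. lookup (u + v) i)"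
    by (rule mdeg_eq_sum) (use Poly_Mapping.keys_add[of u v] in auto)
  also have "\<dots> = (\<Sum>i\<in>?A. lookup u i) + (\<Sum>i\<in>?A. lookup v i)"
    by (simp add: lookup_add sum.distrib)
  also have "\<dots> = mdeg u + mdeg v"
    using mdeg_eq_sum[of ?A u] mdeg_eq_sum[of ?A v] by auto
  finally show ?thesis .
qed

lemma mdeg_single [simp]: "mdeg (single i b) = b"
  by (simp add: mdeg_def)

lemma mdeg_zero [simp]: "mdeg 0 = 0"
  by (simp add: mdeg_def)

lemma lookup_le_mdeg: "lookup m i \<le> mdeg m"
proof (cases "i \<in> keys m")
  case True
  then show ?thesis unfolding mdeg_def by (intro member_le_sum) auto
qed (simp add: in_keys_iff)

lemma finite_monos_of_degree:
  assumes "finite A"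
  shows "finite {m :: mono. keys m \<subseteq> A \<and> mdeg m = t}"
proof -
  let ?S = "{m :: mono. keys m \<subseteq> A \<and> mdeg m = t}"
  have "inj_on (\<lambda>m. restrict (lookup m) A) ?S"
  proof (rule inj_onI)
    fix x y assume x: "x \<in> ?S" and y: "y \<in> ?S"
      and eq: "restrict (lookup x) A = restrict (lookup y) A"
    show "x = y"
    proof (rule poly_mapping_eqI)
      fix i
      show "lookup x i = lookup y i"
      proof (cases "i \<in> A")
        case True
        then show ?thesis using fun_cong[OF eq, of i] by simp
      next
        case False
        then have "i \<notin> keys x" "i \<notin> keys y" using x y by auto
        then show ?thesis by (simp add: in_keys_iff)
      qed
    qed
  qed
  moreover have "(\<lambda>m. restrict (lookup m) A) ` ?S \<subseteq> PiE A (\<lambda>_. {..t})"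
    using lookup_le_mdeg by auto
  then have "finite ((\<lambda>m. restrict (lookup m) A) ` ?S)"
    by (rule finite_subset) (simp add: assms finite_PiE)
  ultimately show ?thesis by (rule finite_imageD[rotated])
qed

lemma finite_in_vars_of_degree: "finite {m. in_vars n m \<and> mdeg m = t}"
  using finite_monos_of_degree[of "{..n}" t] by (simp add: in_vars_def)

lemma in_vars_add: "in_vars n u \<Longrightarrow> in_vars n v \<Longrightarrow> in_vars n (u + v)"
  unfolding in_vars_def using Poly_Mapping.keys_add[of u v] by blast

lemma keys_diff_mono: "keys (u - v :: mono) \<subseteq> keys u"
  by (auto simp: in_keys_iff lookup_minus_mono)

lemma in_vars_diff: "in_vars n u \<Longrightarrow> in_vars n (u - v)"
  unfolding in_vars_def using keys_diff_mono by blast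

lemma mdvd_refl: "mdvd m m"
  by (simp add: mdvd_def)

lemma mdvd_trans: "mdvd u v \<Longrightarrow> mdvd v w \<Longrightarrow> mdvd u w"
  unfolding mdvd_def using order_trans by blast

lemma mdvd_antisym: "mdvd u v \<Longrightarrow> mdvd v u \<Longrightarrow> u = v"
  unfolding mdvd_def by (rule poly_mapping_eqI) (simp add: antisym)

lemma mdvd_lookup_le: "mdvd u v \<Longrightarrow> lookup u i \<le> lookup v i"
  by (simp add: mdvd_def)

lemma mdvd_add_right: "mdvd g m \<Longrightarrow> mdvd g (m + u)"
  unfolding mdvd_def by (auto simp: lookup_add intro: trans_le_add1)

lemma mdvd_imp_add_diff: "mdvd g m \<Longrightarrow> m = g + (m - g)"
  by (rule poly_mapping_eqI) (auto simp: mdvd_def lookup_add lookup_minus_mono)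

lemma mdvd_var_iff: "mdvd (single i 1) m \<longleftrightarrow> 0 < lookup m i"
  by (auto simp: mdvd_def lookup_single_if)

lemma mdvd_add_single_iff:
  assumes "lookup g s = 0" "lookup m s = 0"
  shows "mdvd (single s c + g) (m + single s b) \<longleftrightarrow> c \<le> b \<and> mdvd g m"
proof -
  have "lookup (single s c + g) i = (if i = s then c else lookup g i)"
    and "lookup (m + single s b) i = (if i = s then b else lookup m i)" for i
    using assms by (simp_all add: lookup_add lookup_single_if)
  then show ?thesis
    unfolding mdvd_def using assms by (metis le0)
qed

section \<open>Counting monomials\<close>

definition monos_in :: "nat \<Rightarrow> nat \<Rightarrow> nat \<Rightarrow> mono set" where
  "monos_in s K t = {m. keys m \<subseteq> {s..<s + K} \<and> mdeg m = t}"

lemma finite_monos_in: "finite (monos_in s K t)"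
  unfolding monos_in_def by (rule finite_monos_of_degree) simp

lemma finite_monos_in_filter [simp]: "finite {m \<in> monos_in s K t. P m}"
  by (rule finite_subset[OF _ finite_monos_in]) auto

lemma lookup_monos_in_Suc: "m \<in> monos_in (Suc s) K t \<Longrightarrow> lookup m s = 0"
  by (auto simp: monos_in_def in_keys_iff)

lemma monos_in_Suc_eq:
  "monos_in s (Suc K) t = (\<lambda>(b, m'). m' + single s b) ` (SIGMA b:{..t}. monos_in (Suc s) K (t - b))"
proof (intro set_eqI iffI)
  fix m assume m: "m \<in> monos_in s (Suc K) t"
  define m' where "m' = m - single s (lookup m s)"
  have "m = m' + single s (lookup m s)"
    by (rule poly_mapping_eqI) (simp add: m'_def lookup_add lookup_minus_mono lookup_single_if)
  moreover have "lookup m s \<le> t"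
    using m lookup_le_mdeg[of m s] by (simp add: monos_in_def)
  moreover have "m' \<in> monos_in (Suc s) K (t - lookup m s)"
  proof -
    have lm': "lookup m' i = (if i = s then 0 else lookup m i)" for i
      by (simp add: m'_def lookup_minus_mono lookup_single_if)
    have "keys m' \<subseteq> {Suc s..<Suc s + K}"
    proof
      fix i assume "i \<in> keys m'"
      then have "i \<noteq> s" "i \<in> keys m" by (simp_all add: in_keys_iff lm' split: if_splits)
      with m show "i \<in> {Suc s..<Suc s + K}" by (auto simp: monos_in_def)
    qed
    moreover have "mdeg m = mdeg m' + lookup m s"
      using arg_cong[OF \<open>m = m' + _\<close>, of mdeg] by (simp add: mdeg_add)
    ultimately show ?thesis
      using m by (auto simp: monos_in_def)
  qed
  ultimately show "m \<in> (\<lambda>(b, m'). m' + single s b) ` (SIGMA b:{..t}. monos_in (Suc s) K (t - b))"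
    by (intro image_eqI[of _ _ "(lookup m s, m')"]) auto
next
  fix m assume "m \<in> (\<lambda>(b, m'). m' + single s b) ` (SIGMA b:{..t}. monos_in (Suc s) K (t - b))"
  then obtain b m' where b: "b \<le> t" and m': "m' \<in> monos_in (Suc s) K (t - b)"
    and m: "m = m' + single s b"
    by auto
  have "keys m \<subseteq> keys m' \<union> {s}"
    using Poly_Mapping.keys_add[of m' "single s b"] m by (auto split: if_splits)
  moreover have "keys m' \<subseteq> {Suc s..<Suc s + K}"
    using m' by (simp add: monos_in_def)
  ultimately have "keys m \<subseteq> {s..<s + Suc K}"
    by fastforce
  then show "m \<in> monos_in s (Suc K) t"
    using b m' m by (simp add: monos_in_def mdeg_add)
qed

lemma card_monos_in_Suc_filter:
  "card {m \<in> monos_in s (Suc K) t. P m}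
     = (\<Sum>b\<le>t. card {m' \<in> monos_in (Suc s) K (t - b). P (m' + single s b)})"
proof -
  let ?f = "\<lambda>(b, m'). m' + single s b"
  let ?S = "SIGMA b:{..t}. {m' \<in> monos_in (Suc s) K (t - b). P (m' + single s b)}"
  have inj: "inj_on ?f ?S"
  proof (rule inj_onI, clarify)
    fix b m' c m''
    assume "m' \<in> monos_in (Suc s) K (t - b)" "m'' \<in> monos_in (Suc s) K (t - c)"
      and eq: "m' + single s b = m'' + single s c"
    moreover have "b = c"
      using arg_cong[OF eq, of "\<lambda>m. lookup m s"] calculation(1,2)
      by (simp add: lookup_add lookup_monos_in_Suc lookup_single_if)
    ultimately show "b = c \<and> m' = m''" by simp
  qed
  have "{m \<in> monos_in s (Suc K) t. P m} = ?f ` ?S"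
  proof -
    have "{m \<in> ?f ` A. P m} = ?f ` {x \<in> A. P (?f x)}" for A by blast
    moreover have "{x \<in> SIGMA b:{..t}. monos_in (Suc s) K (t - b). P (?f x)} = ?S" by auto
    ultimately show ?thesis unfolding monos_in_Suc_eq by presburger
  qed
  then have "card {m \<in> monos_in s (Suc K) t. P m} = card ?S"
    using card_image[OF inj] by presburger
  also have "\<dots> = (\<Sum>b\<le>t. card {m' \<in> monos_in (Suc s) K (t - b). P (m' + single s b)})"
    by (rule card_SigmaI) simp_all
  finally show ?thesis .
qed

lemma card_monos_in: "card (monos_in s K t) = (t + K - 1) choose t"
proof (induction K arbitrary: s t)
  case 0
  have "monos_in s 0 t = (if t = 0 then {0} else {})"
    by (auto simp: monos_in_def)
  then show ?case by (cases t) simp_all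
next
  case (Suc K)
  have "card (monos_in s (Suc K) t) = (\<Sum>b\<le>t. (t - b + K - 1) choose (t - b))"
    using card_monos_in_Suc_filter[of s K t "\<lambda>_. True"] by (simp add: Suc.IH)
  also have "\<dots> = (\<Sum>u\<le>t. (u + K - 1) choose u)"
    by (rule sum.reindex_bij_witness[of _ "\<lambda>u. t - u" "\<lambda>u. t - u"]) auto
  also have "\<dots> = (t + Suc K - 1) choose t"
  proof (cases K)
    case 0
    have "(\<Sum>u\<le>t. (u + K - 1) choose u) = (\<Sum>u\<in>{0}. (u + K - 1) choose u)"
      by (rule sum.mono_neutral_right) (auto simp: 0)
    then show ?thesis by (simp add: 0)
  next
    case (Suc r)
    then show ?thesis using sum_choose_lower[of r t] by (simp add: add.commute)
  qed
  finally show ?case .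
qed

section \<open>Standard monomials of the staircase ideal\<close>

text \<open>Egen n d a k is shifted_gen a d (n - (d + 1)) k.  Freeing the first variable s
  allows induction on D, splitting off the exponent of x_s.\<close>

definition shifted_gen :: "(nat \<Rightarrow> nat) \<Rightarrow> nat \<Rightarrow> nat \<Rightarrow> nat \<Rightarrow> mono" where
  "shifted_gen a D s k = (\<Sum>j<k. single (s + j) (a (D - j)))
     + single (s + k) (a (D - k) + (if k < D then 1 else 0))"

definition std_monos :: "(nat \<Rightarrow> nat) \<Rightarrow> nat \<Rightarrow> nat \<Rightarrow> nat \<Rightarrow> mono set" where
  "std_monos a D s t = {m \<in> monos_in s (D + 2) t. \<forall>k\<le>D. \<not> mdvd (shifted_gen a D s k) m}"

lemma Egen_eq_shifted_gen: "Egen n d a k = shifted_gen a d (n - (d + 1)) k"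
  by (simp add: Egen_def shifted_gen_def)

lemma sum_when_shift:
  "(\<Sum>j<k. (f j when s + j = (i::nat))) = (if s \<le> i \<and> i < s + k then f (i - s) else (0::'b::comm_monoid_add))"
proof -
  have "(\<Sum>j<k. (f j when s + j = i)) = (\<Sum>j<k. if j = i - s \<and> s \<le> i then f j else 0)"
    by (rule sum.cong) (auto simp: when_def)
  then show ?thesis by (auto simp: sum.delta' cong: if_cong)
qed

lemma lookup_shifted_gen:
  "lookup (shifted_gen a D s k) i =
     (if s \<le> i \<and> i < s + k then a (D - (i - s))
      else if i = s + k then a (D - k) + (if k < D then 1 else 0) else 0)"
  unfolding shifted_gen_def lookup_add lookup_sum lookup_single sum_when_shift
  by (auto simp: when_def)

lemma shifted_gen_0: "shifted_gen a D s 0 = single s (a D + (if 0 < D then 1 else 0))"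
  by (simp add: shifted_gen_def)

lemma shifted_gen_Suc:
  "shifted_gen a (Suc D) s (Suc k) = single s (a (Suc D)) + shifted_gen a D (Suc s) k"
  by (rule poly_mapping_eqI) (auto simp: lookup_shifted_gen lookup_add lookup_single_if Suc_diff_Suc)

lemma avoids_shifted_gens_Suc_iff:
  assumes "lookup m s = 0"
  shows "(\<forall>k\<le>Suc D. \<not> mdvd (shifted_gen a (Suc D) s k) (m + single s b)) \<longleftrightarrow>
     b < a (Suc D) \<or> b = a (Suc D) \<and> (\<forall>k\<le>D. \<not> mdvd (shifted_gen a D (Suc s) k) m)"
proof -
  have "lookup (shifted_gen a D (Suc s) k) s = 0" for k
    by (simp add: lookup_shifted_gen)
  then have dvd_Suc: "mdvd (shifted_gen a (Suc D) s (Suc k)) (m + single s b) \<longleftrightarrow>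
      a (Suc D) \<le> b \<and> mdvd (shifted_gen a D (Suc s) k) m" for k
    by (simp add: shifted_gen_Suc mdvd_add_single_iff assms)
  have "mdvd (shifted_gen a (Suc D) s 0) (m + single s b) \<longleftrightarrow> a (Suc D) < b"
    using mdvd_add_single_iff[of 0 s m "a (Suc D) + 1" b] assms
    by (simp add: shifted_gen_0 lookup_single_if mdvd_def Suc_le_eq)
  moreover have "(\<forall>k\<le>Suc D. P k) \<longleftrightarrow> P 0 \<and> (\<forall>k\<le>D. P (Suc k))" for P
    using All_less_Suc2[of "Suc D" P] by (simp add: less_Suc_eq_le)
  ultimately show ?thesis
    using dvd_Suc by auto
qed

lemma sum_atMost_split_at:
  assumes "A \<le> (t::nat)"
  shows "(\<Sum>b\<le>t. if b < A then f b else if b = A then c else 0) = (\<Sum>b<A. f b) + (c::'a::comm_monoid_add)"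
proof -
  have "{..t} = {..<A} \<union> {A..t}" using assms by auto
  then have "(\<Sum>b\<le>t. if b < A then f b else if b = A then c else 0)
      = (\<Sum>b<A. if b < A then f b else if b = A then c else 0)
        + (\<Sum>b\<in>{A..t}. if b < A then f b else if b = A then c else 0)"
    by (simp add: sum.union_disjoint ivl_disj_int)
  also have "\<dots> = (\<Sum>b<A. f b) + (\<Sum>b\<in>{A..t}. if b = A then c else 0)"
    by (intro arg_cong2[where f = "(+)"] sum.cong) auto
  also have "\<dots> = (\<Sum>b<A. f b) + c"
    using assms by (simp add: sum.delta')
  finally show ?thesis .
qed

lemma card_std_monos_0: "a 0 \<le> t \<Longrightarrow> card (std_monos a 0 s t) = a 0"
proof -
  assume "a 0 \<le> t"
  have dvd_iff: "mdvd (shifted_gen a 0 s 0) (m + single s b) \<longleftrightarrow> a 0 \<le> b"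
    if "m \<in> monos_in (Suc s) 1 u" for m b u
    using mdvd_add_single_iff[of 0 s m "a 0" b] lookup_monos_in_Suc[OF that]
    by (simp add: shifted_gen_0 lookup_single_if mdvd_def)
  have "card (std_monos a 0 s t) = (\<Sum>b\<le>t. card {m \<in> monos_in (Suc s) 1 (t - b). b < a 0})"
    using card_monos_in_Suc_filter[of s 1 t "\<lambda>m. \<not> mdvd (shifted_gen a 0 s 0) m"]
    by (simp add: std_monos_def dvd_iff not_le cong: conj_cong)
  also have "\<dots> = (\<Sum>b\<le>t. if b < a 0 then 1 else if b = a 0 then 0 else 0)"
    by (rule sum.cong) (auto simp: card_monos_in)
  also have "\<dots> = a 0"
    by (simp only: sum_atMost_split_at[OF \<open>a 0 \<le> t\<close>]) simp
  finally show ?thesis .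
qed

lemma card_std_monos_Suc:
  assumes "a (Suc D) \<le> t"
  shows "card (std_monos a (Suc D) s t) =
    (\<Sum>b<a (Suc D). card (monos_in (Suc s) (D + 2) (t - b)))
      + card (std_monos a D (Suc s) (t - a (Suc D)))"
proof -
  let ?A = "a (Suc D)"
  let ?Q = "\<lambda>m. \<forall>k\<le>D. \<not> mdvd (shifted_gen a D (Suc s) k) m"
  have "card (std_monos a (Suc D) s t) =
      (\<Sum>b\<le>t. card {m \<in> monos_in (Suc s) (D + 2) (t - b). b < ?A \<or> b = ?A \<and> ?Q m})"
    using card_monos_in_Suc_filter[of s "D + 2" t
        "\<lambda>m. \<forall>k\<le>Suc D. \<not> mdvd (shifted_gen a (Suc D) s k) m"]
    by (simp add: std_monos_def avoids_shifted_gens_Suc_iff lookup_monos_in_Suc cong: conj_cong)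
  also have "\<dots> = (\<Sum>b\<le>t. if b < ?A then card (monos_in (Suc s) (D + 2) (t - b))
      else if b = ?A then card (std_monos a D (Suc s) (t - ?A)) else 0)"
    by (rule sum.cong) (auto simp: std_monos_def)
  also have "\<dots> = (\<Sum>b<?A. card (monos_in (Suc s) (D + 2) (t - b)))
      + card (std_monos a D (Suc s) (t - ?A))"
    by (rule sum_atMost_split_at[OF assms])
  finally show ?thesis .
qed

lemma gbinomial_telescope:
  assumes "A \<le> t"
  shows "(\<Sum>b<A. of_nat ((t - b + K) choose (t - b)) :: rat)
       = (of_nat t + of_nat K + 1 gchoose Suc K) - (of_nat t - of_nat A + of_nat K + 1 gchoose Suc K)"
  using assms
proof (induction A)
  case (Suc A)
  let ?y = "of_nat t - of_nat A + of_nat K :: rat"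
  have "of_nat ((t - A + K) choose (t - A)) = (of_nat (t - A + K) gchoose K :: rat)"
    by (subst binomial_symmetric) (auto simp: binomial_gbinomial)
  also have "\<dots> = ?y gchoose K"
    using Suc.prems by (simp add: of_nat_diff algebra_simps)
  finally have "of_nat ((t - A + K) choose (t - A)) = (?y gchoose K)" .
  moreover have "(?y + 1) gchoose Suc K = (?y gchoose K) + (?y gchoose Suc K)"
    by (rule gbinomial_Suc_Suc)
  moreover have "of_nat t - of_nat (Suc A) + of_nat K + 1 = ?y"
    by simp
  moreover have "A \<le> t"
    using Suc.prems by simp
  ultimately show ?case
    unfolding sum.lessThan_Suc using Suc.IH by (simp only:)
qed simp

lemma gbinomial_hockey_stick:
  "(\<Sum>i\<le>D. (y::rat) + of_nat i gchoose (i + 1)) = (y + of_nat D + 1 gchoose (D + 1)) - 1"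
proof (induction D)
  case (Suc D)
  have "(y + of_nat D + 1) + 1 gchoose Suc (Suc D)
      = (y + of_nat D + 1 gchoose Suc D) + (y + of_nat D + 1 gchoose Suc (Suc D))"
    by (rule gbinomial_Suc_Suc)
  moreover have "y + of_nat (Suc D) = y + of_nat D + 1" "Suc D + 1 = Suc (Suc D)" "D + 1 = Suc D"
    by simp_all
  ultimately show ?case
    unfolding sum.atMost_Suc Suc.IH by (simp only:)
qed simp

lemma sum_gchoose_split_last:
  fixes x :: rat
  shows "(\<Sum>i\<le>Suc D. x + of_nat i - of_nat (\<Sum>j\<in>{i..Suc D}. a j) gchoose (i + 1))
    = (\<Sum>i\<le>D. x - of_nat (a (Suc D)) + of_nat i - of_nat (\<Sum>j\<in>{i..D}. a j) gchoose (i + 1))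
      + (x - of_nat (a (Suc D)) + of_nat D + 1 gchoose Suc (Suc D))"
proof -
  have shift: "x + of_nat i - of_nat (\<Sum>j\<in>{i..Suc D}. a j)
      = x - of_nat (a (Suc D)) + of_nat i - of_nat (\<Sum>j\<in>{i..D}. a j)" if "i \<le> D" for i
    using that by (simp add: sum.cl_ivl_Suc)
  have "(\<Sum>i\<le>D. x + of_nat i - of_nat (\<Sum>j\<in>{i..Suc D}. a j) gchoose (i + 1))
      = (\<Sum>i\<le>D. x - of_nat (a (Suc D)) + of_nat i - of_nat (\<Sum>j\<in>{i..D}. a j) gchoose (i + 1))"
    by (intro sum.cong refl) (simp only: atMost_iff shift)
  moreover have "x + of_nat (Suc D) - of_nat (\<Sum>j\<in>{Suc D..Suc D}. a j) = x - of_nat (a (Suc D)) + of_nat D + 1"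
    by simp
  ultimately show ?thesis
    by (simp only: sum.atMost_Suc Suc_eq_plus1[symmetric])
qed

lemma card_std_monos:
  "(\<Sum>j\<le>D. a j) \<le> t \<Longrightarrow> of_nat (card (std_monos a D s t)) =
     (of_nat t + of_nat D + 1 gchoose (D + 1)) - 1
       - (\<Sum>i\<le>D. of_nat t + of_nat i - of_nat (\<Sum>j\<in>{i..D}. a j) gchoose (i + 1) :: rat)"
proof (induction D arbitrary: s t)
  case 0
  then show ?case by (simp add: card_std_monos_0)
next
  case (Suc D)
  let ?A = "a (Suc D)"
  let ?x = "of_nat t :: rat"
  let ?y = "of_nat t - of_nat ?A :: rat"
  have At: "?A \<le> t" and IH_bound: "(\<Sum>j\<le>D. a j) \<le> t - ?A"
    using Suc.prems by simp_all
  have y: "of_nat (t - ?A) = ?y"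
    using At by (simp add: of_nat_diff)
  \<comment> \<open>Y and R are named so that the simplifier cannot rewrite the gchoose arguments
    differently in the pieces combined by linarith at the end.\<close>
  define Y where "Y = ?y + of_nat D + 1"
  define R where "R i = ?y + of_nat i - of_nat (\<Sum>j\<in>{i..D}. a j) gchoose (i + 1)" for i
  have telescope: "(\<Sum>b<?A. of_nat ((t - b + Suc D) choose (t - b)))
      = (?x + of_nat (Suc D) + 1 gchoose (Suc D + 1)) - (Y + 1 gchoose Suc (Suc D))"
  proof -
    have "of_nat t - of_nat ?A + of_nat (Suc D) + 1 = Y + 1"
      by (simp add: Y_def)
    then show ?thesis
      using gbinomial_telescope[OF At, of "Suc D"] by (simp only: Suc_eq_plus1)
  qed
  have IH: "of_nat (card (std_monos a D (Suc s) (t - ?A))) = (Y gchoose Suc D) - 1 - (\<Sum>i\<le>D. R i)"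
    using Suc.IH[OF IH_bound] y by (simp add: Y_def R_def)
  have pascal: "Y + 1 gchoose Suc (Suc D) = (Y gchoose Suc D) + (Y gchoose Suc (Suc D))"
    by (rule gbinomial_Suc_Suc)
  have "(\<Sum>i\<le>Suc D. ?x + of_nat i - of_nat (\<Sum>j\<in>{i..Suc D}. a j) gchoose (i + 1))
      = (\<Sum>i\<le>D. R i) + (Y gchoose Suc (Suc D))"
    unfolding R_def Y_def by (rule sum_gchoose_split_last)
  moreover have "of_nat (card (std_monos a (Suc D) s t))
      = (\<Sum>b<?A. of_nat ((t - b + Suc D) choose (t - b)))
        + (of_nat (card (std_monos a D (Suc s) (t - ?A))) :: rat)"
    by (simp add: card_std_monos_Suc[of a D t s, OF At] card_monos_in)
  ultimately show ?case
    using telescope IH pascal by linarith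
qed

section \<open>Monomial ideals\<close>

definition mono_ideal :: "nat \<Rightarrow> mono set \<Rightarrow> 'k::comm_ring_1 mpoly set" where
  "mono_ideal n Ms = {p \<in> pring n. keys p \<subseteq> Ms}"

definition upclosed :: "nat \<Rightarrow> mono set \<Rightarrow> bool" where
  "upclosed n Ms \<longleftrightarrow> (\<forall>m\<in>Ms. in_vars n m \<and> (\<forall>u. in_vars n u \<longrightarrow> m + u \<in> Ms))"

definition multiples :: "nat \<Rightarrow> mono set \<Rightarrow> mono set" where
  "multiples n G = {m. in_vars n m \<and> (\<exists>g\<in>G. mdvd g m)}"

lemma upclosed_multiples: "upclosed n (multiples n G)"
  unfolding upclosed_def multiples_def by (auto intro: in_vars_add mdvd_add_right)

lemma subset_multiples: "(\<And>g. g \<in> G \<Longrightarrow> in_vars n g) \<Longrightarrow> G \<subseteq> multiples n G"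
  unfolding multiples_def using mdvd_refl by blast

lemma pring_add: "p \<in> pring n \<Longrightarrow> q \<in> pring n \<Longrightarrow> p + q \<in> pring n"
  unfolding pring_def using Poly_Mapping.keys_add[of p q] by blast

lemma pring_mult: "p \<in> pring n \<Longrightarrow> q \<in> pring n \<Longrightarrow> p * q \<in> pring n"
  unfolding pring_def using Poly_Mapping.keys_mult[of p q] by (auto dest!: subsetD intro: in_vars_add)

lemma keys_mult_upclosed:
  assumes "upclosed n Ms" "keys p \<subseteq> Ms" "q \<in> pring n"
  shows "keys (q * p) \<subseteq> Ms"
proof
  fix m assume "m \<in> keys (q * p)"
  then obtain u v where "m = u + v" "u \<in> keys q" "v \<in> keys p"
    using Poly_Mapping.keys_mult[of q p] by blast
  with assms have "v + u \<in> Ms"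
    by (auto simp: upclosed_def pring_def)
  with \<open>m = u + v\<close> show "m \<in> Ms"
    by (simp add: add.commute)
qed

lemma is_ideal_mono_ideal:
  assumes "upclosed n Ms"
  shows "is_ideal n (mono_ideal n Ms :: 'k::comm_ring_1 mpoly set)"
  unfolding is_ideal_def
proof (intro conjI ballI)
  fix p q :: "'k mpoly" assume p: "p \<in> mono_ideal n Ms"
  show "p + q \<in> mono_ideal n Ms" if "q \<in> mono_ideal n Ms"
    using p that Poly_Mapping.keys_add[of p q] by (auto simp: mono_ideal_def pring_add)
  show "q * p \<in> mono_ideal n Ms" if "q \<in> pring n"
    using p that keys_mult_upclosed[OF assms] by (auto simp: mono_ideal_def pring_mult)
qed (auto simp: mono_ideal_def pring_def)

lemma keys_hcomp: "keys (hcomp i p) \<subseteq> keys p"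
proof -
  have "keys (hcomp i p) \<subseteq> (\<Union>m\<in>{m\<in>keys p. mdeg m = i}. keys (single m (lookup p m)))"
    unfolding hcomp_def by (rule Poly_Mapping.keys_sum)
  then show ?thesis by auto
qed

lemma homogeneous_mono_ideal:
  assumes "upclosed n Ms"
  shows "homogeneous_ideal n (mono_ideal n Ms :: 'k::comm_ring_1 mpoly set)"
  unfolding homogeneous_ideal_def using is_ideal_mono_ideal[OF assms] keys_hcomp
  by (fastforce simp: mono_ideal_def pring_def)

lemma poly_mapping_sum_single: "p = (\<Sum>m\<in>keys p. single m (lookup p m))"
  by (rule poly_mapping_eqI)
     (simp add: lookup_sum lookup_single_if sum.delta in_keys_iff cong: if_cong)

lemma ideal_sum_mem:
  assumes "is_ideal n J"
  shows "finite A \<Longrightarrow> (\<And>x. x \<in> A \<Longrightarrow> f x \<in> J) \<Longrightarrow> sum f A \<in> J"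
  by (induction A rule: finite_induct) (use assms in \<open>auto simp: is_ideal_def\<close>)

lemma keys_mon [simp]: "keys (mon m :: 'k::comm_ring_1 mpoly) = {m}"
  by (simp add: mon_def)

lemma gen_ideal_mon_eq:
  assumes G: "\<And>g. g \<in> G \<Longrightarrow> in_vars n g"
  shows "gen_ideal n (mon ` G) = (mono_ideal n (multiples n G) :: 'k::comm_ring_1 mpoly set)"
proof
  have "is_ideal n (mono_ideal n (multiples n G) :: 'k mpoly set)"
    by (rule is_ideal_mono_ideal[OF upclosed_multiples])
  moreover have "mon ` G \<subseteq> (mono_ideal n (multiples n G) :: 'k mpoly set)"
    using G subset_multiples[of G n, OF G] by (auto simp: mono_ideal_def pring_def)
  ultimately show "gen_ideal n (mon ` G) \<subseteq> (mono_ideal n (multiples n G) :: 'k mpoly set)"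
    unfolding gen_ideal_def by blast
next
  show "(mono_ideal n (multiples n G) :: 'k mpoly set) \<subseteq> gen_ideal n (mon ` G)"
    unfolding gen_ideal_def
  proof (intro Inter_greatest subsetI, clarify)
    fix p :: "'k mpoly" and J :: "'k mpoly set"
    assume p: "p \<in> mono_ideal n (multiples n G)" and J: "is_ideal n J" "mon ` G \<subseteq> J"
    have "single m (lookup p m) \<in> J" if m: "m \<in> keys p" for m
    proof -
      obtain g where g: "g \<in> G" "mdvd g m" "in_vars n m"
        using p m by (auto simp: mono_ideal_def multiples_def)
      have "single m (lookup p m) = single (m - g) (lookup p m) * mon g"
        using mdvd_imp_add_diff[OF g(2)] by (simp add: mon_def mult_single add.commute)
      moreover have "single (m - g) (lookup p m) \<in> pring n"
        using in_vars_diff[OF g(3)] by (simp add: pring_def)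
      ultimately show ?thesis
        using J g(1) by (auto simp: is_ideal_def)
    qed
    then have "(\<Sum>m\<in>keys p. single m (lookup p m)) \<in> J"
      by (intro ideal_sum_mem[OF J(1)] finite_keys)
    then show "p \<in> J"
      by (simp only: poly_mapping_sum_single[symmetric])
  qed
qed

lemma mon_mem_mono_ideal:
  "(mon m :: 'k::comm_ring_1 mpoly) \<in> mono_ideal n Ms \<longleftrightarrow> in_vars n m \<and> m \<in> Ms"
  by (simp add: mono_ideal_def pring_def)

lemma mingens_mono_ideal_multiples:
  assumes G: "\<And>g. g \<in> G \<Longrightarrow> in_vars n g"
  shows "mingens n (mono_ideal n (multiples n G) :: 'k::comm_ring_1 mpoly set)
       = {g \<in> G. \<forall>g'\<in>G. mdvd g' g \<longrightarrow> g' = g}"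
proof (intro set_eqI iffI)
  fix m assume "m \<in> mingens n (mono_ideal n (multiples n G) :: 'k mpoly set)"
  then have m: "m \<in> multiples n G"
    and min: "\<And>m'. m' \<in> multiples n G \<Longrightarrow> mdvd m' m \<Longrightarrow> m' = m"
    by (auto simp: mingens_def mon_mem_mono_ideal multiples_def)
  have G_mult: "g \<in> multiples n G" if "g \<in> G" for g
    using subset_multiples[of G n, OF G] that by blast
  obtain g where "g \<in> G" "mdvd g m"
    using m by (auto simp: multiples_def)
  with min G_mult have "m \<in> G" by metis
  with min G_mult show "m \<in> {g \<in> G. \<forall>g'\<in>G. mdvd g' g \<longrightarrow> g' = g}" by blast
next
  fix g assume "g \<in> {g \<in> G. \<forall>g'\<in>G. mdvd g' g \<longrightarrow> g' = g}"
  then have g: "g \<in> G" and min: "\<And>g'. g' \<in> G \<Longrightarrow> mdvd g' g \<Longrightarrow> g' = g"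
    by auto
  have "m' = g" if m': "m' \<in> multiples n G" "mdvd m' g" for m'
  proof -
    obtain g' where "g' \<in> G" "mdvd g' m'"
      using m'(1) by (auto simp: multiples_def)
    with min m'(2) have "g' = g" by (metis mdvd_trans)
    with \<open>mdvd g' m'\<close> m'(2) show ?thesis by (simp add: mdvd_antisym)
  qed
  moreover have "g \<in> multiples n G"
    using subset_multiples[of G n, OF G] g by blast
  ultimately show "g \<in> mingens n (mono_ideal n (multiples n G) :: 'k mpoly set)"
    by (auto simp: mingens_def mon_mem_mono_ideal multiples_def)
qed

lemma smul_mon: "smul c (mon m) = single m c"
  by (simp add: smul_def mon_def mult_single)

interpretation mpoly_vs: vector_space "smul :: 'k::field \<Rightarrow> 'k mpoly \<Rightarrow> 'k mpoly"
  by unfold_locales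
    (simp_all add: smul_def distrib_left single_add distrib_right mult.assoc[symmetric] mult_single)

lemma lin_indep_imp_independent:
  assumes "finite S" "lin_indep (S :: 'k::field mpoly set)"
  shows "mpoly_vs.independent S"
  unfolding mpoly_vs.independent_explicit_finite_subsets
proof (intro allI impI ballI)
  fix T u v assume T: "T \<subseteq> S" "finite T" and sum0: "(\<Sum>v\<in>T. smul (u v) v) = 0" and v: "v \<in> T"
  define c where "c v = (if v \<in> T then u v else 0)" for v
  have "(\<Sum>v\<in>S. smul (c v) v) = (\<Sum>v\<in>T. smul (c v) v)"
    by (rule sum.mono_neutral_right) (use assms T in \<open>auto simp: c_def smul_def\<close>)
  also have "\<dots> = 0" using sum0 by (simp add: c_def)
  finally have "c v = 0"
    using assms(2) v T by (auto simp: lin_indep_def)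
  then show "u v = 0" using v by (simp add: c_def)
qed

lemma lin_indep_mon_image: "finite A \<Longrightarrow> lin_indep (mon ` A :: 'k::field mpoly set)"
  unfolding lin_indep_def
proof (intro allI impI ballI)
  fix c :: "'k mpoly \<Rightarrow> 'k" and p :: "'k mpoly"
  assume A: "finite A" and sum0: "(\<Sum>p\<in>mon ` A. smul (c p) p) = 0" and "p \<in> mon ` A"
  then obtain m where m: "m \<in> A" "p = mon m" by auto
  have inj: "inj_on (mon :: mono \<Rightarrow> 'k mpoly) A"
    by (rule inj_onI) (metis keys_mon singleton_inject)
  have "(\<Sum>m'\<in>A. single m' (c (mon m'))) = 0"
    using sum0 by (simp add: sum.reindex[OF inj] smul_mon)
  then have "lookup (\<Sum>m'\<in>A. single m' (c (mon m'))) m = 0"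
    by simp
  then show "c p = 0"
    using m A by (simp add: lookup_sum lookup_single_if sum.delta' cong: if_cong)
qed

lemma dimI_mono_ideal:
  assumes "upclosed n Ms" and fin: "finite {m\<in>Ms. mdeg m = t}"
  shows "dimI (mono_ideal n Ms :: 'k::field mpoly set) t = card {m\<in>Ms. mdeg m = t}"
proof -
  let ?Mt = "{m\<in>Ms. mdeg m = t}"
  let ?B = "mon ` ?Mt :: 'k mpoly set"
  have inj: "inj_on (mon :: mono \<Rightarrow> 'k mpoly) ?Mt"
    by (rule inj_onI) (metis keys_mon singleton_inject)
  have B: "finite ?B" "card ?B = card ?Mt"
    using fin card_image[OF inj] by simp_all
  have "?B \<subseteq> piece (mono_ideal n Ms) t"
    using assms(1) by (auto simp: piece_def mono_ideal_def pring_def upclosed_def)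
  then have "card ?Mt \<in> {card S | S. finite S \<and> S \<subseteq> piece (mono_ideal n Ms :: 'k mpoly set) t \<and> lin_indep S}"
    using B lin_indep_mon_image[OF fin] by (metis (mono_tags, lifting) mem_Collect_eq)
  moreover have "card S \<le> card ?Mt"
    if "finite S" "S \<subseteq> piece (mono_ideal n Ms :: 'k mpoly set) t" "lin_indep S" for S
  proof -
    have "p \<in> mpoly_vs.span ?B" if "p \<in> S" for p
    proof -
      have "keys p \<subseteq> ?Mt"
        using \<open>p \<in> S\<close> \<open>S \<subseteq> _\<close> by (auto simp: piece_def mono_ideal_def)
      then have "(\<Sum>m\<in>keys p. smul (lookup p m) (mon m)) \<in> mpoly_vs.span ?B"
        by (intro mpoly_vs.span_sum mpoly_vs.span_scale mpoly_vs.span_base) auto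
      then show ?thesis
        by (metis (no_types, lifting) poly_mapping_sum_single smul_mon sum.cong)
    qed
    then have "card S \<le> card ?B"
      using mpoly_vs.independent_span_bound[OF B(1)] lin_indep_imp_independent[OF that(1,3)]
      by blast
    then show ?thesis using B by simp
  qed
  ultimately show ?thesis
    unfolding dimI_def by (intro cSup_eq_maximum) auto
qed

section \<open>Lexicographic segments\<close>

lemma lex_gt_irrefl: "\<not> lex_gt m m"
  by (simp add: lex_gt_def)

lemma lex_gt_total:
  assumes "m \<noteq> m'"
  shows "lex_gt m m' \<or> lex_gt m' m"
proof -
  have "\<exists>i. lookup m i \<noteq> lookup m' i"
  proof (rule ccontr)
    assume "\<not> (\<exists>i. lookup m i \<noteq> lookup m' i)"
    then have "m = m'" by (intro poly_mapping_eqI) simp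
    with assms show False by simp
  qed
  define j where "j = (LEAST i. lookup m i \<noteq> lookup m' i)"
  have j: "lookup m j \<noteq> lookup m' j"
    unfolding j_def by (rule LeastI_ex) fact
  have below: "\<forall>i<j. lookup m i = lookup m' i"
    unfolding j_def using not_less_Least by blast
  show ?thesis
  proof (cases "lookup m' j < lookup m j")
    case True
    then show ?thesis using below unfolding lex_gt_def by (intro disjI1 exI[of _ j]) simp
  next
    case False
    then have "lookup m j < lookup m' j" using j by simp
    then show ?thesis using below unfolding lex_gt_def by (intro disjI2 exI[of _ j]) simp
  qed
qed

definition lex_upclosed :: "nat \<Rightarrow> mono set \<Rightarrow> bool" where
  "lex_upclosed n Ms \<longleftrightarrow> (\<forall>m\<in>Ms. \<forall>m'. in_vars n m' \<longrightarrow> lex_gt m' m \<longrightarrow> m' \<in> Ms)"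

lemma finite_lex_greater: "finite {m'. in_vars n m' \<and> mdeg m' = t \<and> lex_gt m' m}"
  by (rule finite_subset[OF _ finite_in_vars_of_degree[of n t]]) auto

lemma toplex_lex_upclosed:
  assumes up: "lex_upclosed n Ms" and vars: "\<And>m. m \<in> Ms \<Longrightarrow> in_vars n m"
  shows "toplex n t (card {m\<in>Ms. mdeg m = t}) = {m\<in>Ms. mdeg m = t}"
proof (intro set_eqI iffI)
  let ?Mt = "{m\<in>Ms. mdeg m = t}"
  let ?G = "\<lambda>m. {m'. in_vars n m' \<and> mdeg m' = t \<and> lex_gt m' m}"
  have fin: "finite ?Mt"
    by (rule finite_subset[OF _ finite_in_vars_of_degree[of n t]]) (auto simp: vars)
  fix m
  show "m \<in> ?Mt" if m: "m \<in> toplex n t (card ?Mt)"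
  proof (rule ccontr)
    assume "m \<notin> ?Mt"
    from m have m_vars: "in_vars n m" and m_deg: "mdeg m = t" and few: "card (?G m) < card ?Mt"
      by (simp_all add: toplex_def)
    have "?Mt \<subseteq> ?G m"
    proof
      fix m' assume m': "m' \<in> ?Mt"
      then have "m' \<noteq> m" using \<open>m \<notin> ?Mt\<close> by blast
      moreover have "\<not> lex_gt m m'"
        using up m' m_vars m_deg \<open>m \<notin> ?Mt\<close> unfolding lex_upclosed_def by blast
      ultimately have "lex_gt m' m"
        using lex_gt_total by blast
      with m' vars show "m' \<in> ?G m" by blast
    qed
    then have "card ?Mt \<le> card (?G m)"
      by (rule card_mono[OF finite_lex_greater])
    with few show False by simp
  qed
  show "m \<in> toplex n t (card ?Mt)" if m: "m \<in> ?Mt"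
  proof -
    have "?G m \<subseteq> ?Mt - {m}"
      using up m lex_gt_irrefl by (auto simp: lex_upclosed_def)
    then have "card (?G m) < card ?Mt"
      using card_mono[of "?Mt - {m}" "?G m"] card_Diff1_less[OF fin m] fin by fastforce
    then show ?thesis
      using m vars by (simp add: toplex_def)
  qed
qed

lemma toplex_all:
  assumes "nmon n t \<le> k"
  shows "toplex n t k = {m. in_vars n m \<and> mdeg m = t}"
proof -
  let ?Mt = "{m. in_vars n m \<and> mdeg m = t}"
  have "card {m'. in_vars n m' \<and> mdeg m' = t \<and> lex_gt m' m} < k" if "m \<in> ?Mt" for m
  proof -
    have "{m'. in_vars n m' \<and> mdeg m' = t \<and> lex_gt m' m} \<subseteq> ?Mt - {m}"
      using lex_gt_irrefl by auto
    then have "card {m'. in_vars n m' \<and> mdeg m' = t \<and> lex_gt m' m} \<le> card (?Mt - {m})"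
      by (intro card_mono) (simp_all add: finite_in_vars_of_degree)
    also have "\<dots> < card ?Mt"
      by (rule card_Diff1_less[OF finite_in_vars_of_degree that])
    finally show ?thesis
      using assms by (simp add: nmon_def)
  qed
  then show ?thesis
    by (auto simp: toplex_def)
qed

lemma toplex_of_truncated_eq:
  assumes up: "lex_upclosed n Ms" and vars: "\<And>m. m \<in> Ms \<Longrightarrow> in_vars n m"
    and eq: "nmon n t - k = nmon n t - card {m\<in>Ms. mdeg m = t}"
  shows "toplex n t k = {m\<in>Ms. mdeg m = t}"
proof -
  let ?Mt = "{m\<in>Ms. mdeg m = t}"
  let ?All = "{m. in_vars n m \<and> mdeg m = t}"
  have sub: "?Mt \<subseteq> ?All"
    using vars by auto
  then have le: "card ?Mt \<le> nmon n t"
    unfolding nmon_def by (rule card_mono[OF finite_in_vars_of_degree])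
  show ?thesis
  proof (cases "k \<le> nmon n t")
    case True
    with eq le have "k = card ?Mt" by simp
    then show ?thesis using toplex_lex_upclosed[OF up vars] by simp
  next
    case False
    with eq le have "card ?Mt = card ?All" by (simp add: nmon_def)
    then have "?Mt = ?All"
      using card_subset_eq[OF finite_in_vars_of_degree sub] by simp
    with False show ?thesis using toplex_all[of n t k] by simp
  qed
qed

text \<open>If m is a multiple of g and m' overtakes m lexicographically at position j,
  then m' is a multiple of the generator g' provided for g and j.\<close>

definition lex_stable :: "mono set \<Rightarrow> bool" where
  "lex_stable G \<longleftrightarrow> (\<forall>g\<in>G. \<forall>j. \<exists>g'\<in>G. (\<forall>i<j. lookup g' i \<le> lookup g i)
      \<and> lookup g' j \<le> Suc (lookup g j) \<and> (\<forall>i>j. lookup g' i = 0))"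

lemma lex_upclosed_multiples:
  assumes "lex_stable G"
  shows "lex_upclosed n (multiples n G)"
  unfolding lex_upclosed_def
proof (intro ballI allI impI)
  fix m m' assume "m \<in> multiples n G" and m': "in_vars n m'" "lex_gt m' m"
  then obtain g where g: "g \<in> G" "mdvd g m"
    by (auto simp: multiples_def)
  obtain j where j: "lookup m j < lookup m' j" "\<forall>i<j. lookup m' i = lookup m i"
    using m'(2) by (auto simp: lex_gt_def)
  obtain g' where g': "g' \<in> G" "\<forall>i<j. lookup g' i \<le> lookup g i"
    "lookup g' j \<le> Suc (lookup g j)" "\<forall>i>j. lookup g' i = 0"
    using assms g(1) unfolding lex_stable_def by blast
  have "lookup g' i \<le> lookup m' i" for i
  proof (cases i j rule: linorder_cases)
    case less
    then show ?thesis using g' j g(2) by (metis mdvd_lookup_le order_trans)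
  next
    case equal
    then show ?thesis using g' j mdvd_lookup_le[OF g(2), of j] by simp
  next
    case greater
    then show ?thesis using g' by simp
  qed
  then show "m' \<in> multiples n G"
    using g'(1) m'(1) by (auto simp: multiples_def mdvd_def)
qed

section \<open>Saturation\<close>

lemma lookup_mult_mon: "lookup (f * mon v :: 'k::comm_ring_1 mpoly) (u + v) = lookup f u"
proof -
  have "lookup (f * mon v) (u + v)
      = Sum_any (\<lambda>l. lookup f l * Sum_any (\<lambda>q. (1 when v = q) when u + v = l + q))"
    by (simp add: mon_def lookup_mult lookup_single)
  also have "\<dots> = Sum_any (\<lambda>l. lookup f l * (1 when u + v = l + v))"
  proof -
    have "Sum_any (\<lambda>q. ((1::'k) when v = q) when u + v = l + q)
        = Sum_any (\<lambda>q. (1 when u + v = l + q) when v = q)" for l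
      by (rule Sum_any.cong) (simp add: when_def)
    then show ?thesis by simp
  qed
  also have "\<dots> = Sum_any (\<lambda>l. lookup f l when l = u)"
    by (rule Sum_any.cong) (auto simp: when_def)
  finally show ?thesis by simp
qed

lemma mono_ideal_subset_saturation:
  fixes I :: "'k::field mpoly set"
  assumes up: "upclosed n Ms"
    and large: "\<And>t. T \<le> t \<Longrightarrow> toplex n t (dimI I t) = {m\<in>Ms. mdeg m = t}"
  shows "mono_ideal n Ms \<subseteq> saturation n (lexH n I)"
proof
  fix f :: "'k mpoly" assume "f \<in> mono_ideal n Ms"
  then have f: "f \<in> pring n" "keys f \<subseteq> Ms"
    by (auto simp: mono_ideal_def)
  have "f * g \<in> lexH n I" if g: "g \<in> pring n" "\<forall>m\<in>keys g. Suc T \<le> mdeg m" for g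
  proof -
    have "m \<in> toplex n (mdeg m) (dimI I (mdeg m))" if m: "m \<in> keys (f * g)" for m
    proof -
      obtain u v where uv: "m = u + v" "u \<in> keys f" "v \<in> keys g"
        using m Poly_Mapping.keys_mult[of f g] by blast
      then have "m \<in> Ms"
        using up f g by (auto simp: upclosed_def pring_def)
      moreover have "T \<le> mdeg m"
        using g uv by (auto simp: mdeg_add)
      ultimately show ?thesis
        using large by auto
    qed
    then show ?thesis
      using pring_mult[OF f(1) g(1)] by (simp add: lexH_def)
  qed
  then show "f \<in> saturation n (lexH n I)"
    using f(1) unfolding saturation_def by (intro CollectI conjI exI[of _ "Suc T"]) auto
qed

lemma saturation_subset_mono_ideal:
  fixes I :: "'k::field mpoly set"
  assumes sat: "\<And>u k. in_vars n u \<Longrightarrow> u + single n k \<in> Ms \<Longrightarrow> u \<in> Ms"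
    and large: "\<And>t. T \<le> t \<Longrightarrow> toplex n t (dimI I t) = {m\<in>Ms. mdeg m = t}"
  shows "saturation n (lexH n I) \<subseteq> mono_ideal n Ms"
proof
  fix f :: "'k mpoly" assume "f \<in> saturation n (lexH n I)"
  then obtain j where f: "f \<in> pring n"
    and mult: "\<And>g. g \<in> pring n \<Longrightarrow> \<forall>m\<in>keys g. j \<le> mdeg m \<Longrightarrow> f * g \<in> lexH n I"
    by (auto simp: saturation_def)
  define v where "v = single n (j + T)"
  have "f * mon v \<in> lexH n I"
    by (rule mult) (simp_all add: v_def mon_def pring_def in_vars_def)
  then have top: "\<And>m. m \<in> keys (f * mon v) \<Longrightarrow> m \<in> toplex n (mdeg m) (dimI I (mdeg m))"
    by (simp add: lexH_def)
  have "u \<in> Ms" if u: "u \<in> keys f" for u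
  proof -
    have "u + v \<in> keys (f * mon v)"
      using u by (simp add: in_keys_iff lookup_mult_mon)
    moreover have "T \<le> mdeg (u + v)"
      by (simp add: mdeg_add v_def)
    ultimately have "u + v \<in> Ms"
      using top large by auto
    moreover have "in_vars n u"
      using f u by (auto simp: pring_def)
    ultimately show ?thesis
      using sat by (simp add: v_def)
  qed
  with f show "f \<in> mono_ideal n Ms"
    by (auto simp: mono_ideal_def)
qed

lemma saturation_lexH_eq:
  fixes I :: "'k::field mpoly set"
  assumes "upclosed n Ms"
    and "\<And>u k. in_vars n u \<Longrightarrow> u + single n k \<in> Ms \<Longrightarrow> u \<in> Ms"
    and "\<And>t. T \<le> t \<Longrightarrow> toplex n t (dimI I t) = {m\<in>Ms. mdeg m = t}"
  shows "saturation n (lexH n I) = mono_ideal n Ms"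
proof (rule equalityI)
  show "saturation n (lexH n I) \<subseteq> mono_ideal n Ms"
    by (rule saturation_subset_mono_ideal[where T = T]) (use assms(2,3) in auto)
  show "mono_ideal n Ms \<subseteq> saturation n (lexH n I)"
    by (rule mono_ideal_subset_saturation[where T = T]) (use assms(1,3) in auto)
qed

lemma lookup_shifted_gen_below: "i < s \<Longrightarrow> lookup (shifted_gen a D s k) i = 0"
  by (simp add: lookup_shifted_gen)

lemma lookup_shifted_gen_beyond: "s + k < i \<Longrightarrow> lookup (shifted_gen a D s k) i = 0"
  by (simp add: lookup_shifted_gen)

lemma lookup_shifted_gen_prefix:
  "q \<le> k \<Longrightarrow> i < s + q \<Longrightarrow> lookup (shifted_gen a D s q) i = lookup (shifted_gen a D s k) i"
  by (simp add: lookup_shifted_gen)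

lemma lookup_shifted_gen_corner:
  "q \<le> k \<Longrightarrow> lookup (shifted_gen a D s q) (s + q) \<le> Suc (lookup (shifted_gen a D s k) (s + q))"
  by (auto simp: lookup_shifted_gen)

lemma gens_i_cases:
  assumes "g \<in> gens_i n d a"
  obtains i where "i + d + 2 \<le> n" "g = single i 1"
  | k where "k \<le> d" "g = shifted_gen a d (n - (d + 1)) k"
  using assms unfolding gens_i_def Egen_eq_shifted_gen by blast

lemma lookup_gens_i_ge:
  assumes "d < n" "g \<in> gens_i n d a" "n \<le> i"
  shows "lookup g i = 0"
  using assms(2)
proof (cases rule: gens_i_cases)
  case (1 j)
  then show ?thesis using assms by (simp add: lookup_single_if)
next
  case (2 k)
  then show ?thesis using assms by (simp add: lookup_shifted_gen_beyond)
qed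

lemma in_vars_gens_i: "d < n \<Longrightarrow> g \<in> gens_i n d a \<Longrightarrow> in_vars n g"
  unfolding in_vars_def using lookup_gens_i_ge
  by (metis atMost_iff in_keys_iff nat_le_linear subsetI)

lemma lex_stable_gens_i:
  assumes "d < n"
  shows "lex_stable (gens_i n d a)"
  unfolding lex_stable_def
proof (intro ballI allI)
  let ?c = "n - (d + 1)"
  let ?P = "\<lambda>g g' j. (\<forall>i<j. lookup g' i \<le> lookup g i) \<and> lookup g' j \<le> Suc (lookup g j)
      \<and> (\<forall>i>j. lookup g' i = 0)"
  fix g j assume g: "g \<in> gens_i n d a"
  have self: "?P g g j" if "\<forall>i>j. lookup g i = 0"
    using that by simp
  show "\<exists>g'\<in>gens_i n d a. ?P g g' j"
  proof (cases "j < ?c")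
    case True
    then have "single j 1 \<in> gens_i n d a"
      by (auto simp: gens_i_def)
    moreover have "?P g (single j 1) j"
      by (simp add: lookup_single_if)
    ultimately show ?thesis by blast
  next
    case False
    from g show ?thesis
    proof (cases rule: gens_i_cases)
      case (1 i)
      then have "\<forall>i'>j. lookup g i' = 0"
        using False by (auto simp: lookup_single_if)
      then show ?thesis using g self by blast
    next
      case (2 k)
      show ?thesis
      proof (cases "?c + k < j")
        case True
        then show ?thesis using 2 g self by (auto simp: lookup_shifted_gen_beyond)
      next
        case beyond: False
        define q where "q = j - ?c"
        have q: "q \<le> k" "j = ?c + q"
          using False beyond by (auto simp: q_def)
        have "shifted_gen a d ?c q \<in> gens_i n d a"
          using q 2 by (auto simp: gens_i_def Egen_eq_shifted_gen)
        moreover have "?P g (shifted_gen a d ?c q) j"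
          using q 2 lookup_shifted_gen_prefix[OF q(1)] lookup_shifted_gen_corner[OF q(1)]
          by (simp add: lookup_shifted_gen_beyond)
        ultimately show ?thesis by blast
      qed
    qed
  qed
qed

lemma multiples_cancel_var:
  assumes "\<And>g. g \<in> G \<Longrightarrow> lookup g n = 0" "in_vars n u" "u + single n k \<in> multiples n G"
  shows "u \<in> multiples n G"
proof -
  obtain g where g: "g \<in> G" "mdvd g (u + single n k)"
    using assms(3) by (auto simp: multiples_def)
  have "lookup g i \<le> lookup u i" for i
    using mdvd_lookup_le[OF g(2), of i] assms(1)[OF g(1)]
    by (cases "i = n") (simp_all add: lookup_add lookup_single_if)
  then show ?thesis
    using g(1) assms(2) by (auto simp: multiples_def mdvd_def)
qed

lemma not_in_multiples_gens_i_iff: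
  assumes "d < n"
  shows "{m. in_vars n m \<and> mdeg m = t} - multiples n (gens_i n d a) = std_monos a d (n - (d + 1)) t"
proof (intro set_eqI iffI)
  let ?c = "n - (d + 1)"
  fix m
  assume "m \<in> {m. in_vars n m \<and> mdeg m = t} - multiples n (gens_i n d a)"
  then have m: "in_vars n m" "mdeg m = t" and nd: "\<And>g. g \<in> gens_i n d a \<Longrightarrow> \<not> mdvd g m"
    by (auto simp: multiples_def)
  have "keys m \<subseteq> {?c..<?c + (d + 2)}"
  proof
    fix i assume i: "i \<in> keys m"
    have "\<not> i < ?c"
    proof
      assume "i < ?c"
      then have "single i 1 \<in> gens_i n d a" by (auto simp: gens_i_def)
      with nd i show False using mdvd_var_iff[of i m] by (auto simp: in_keys_iff)
    qed
    then show "i \<in> {?c..<?c + (d + 2)}" using i m(1) assms by (auto simp: in_vars_def)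
  qed
  moreover have "\<forall>k\<le>d. \<not> mdvd (shifted_gen a d ?c k) m"
    using nd by (auto simp: gens_i_def Egen_eq_shifted_gen)
  ultimately show "m \<in> std_monos a d ?c t"
    using m by (simp add: std_monos_def monos_in_def)
next
  let ?c = "n - (d + 1)"
  fix m assume "m \<in> std_monos a d ?c t"
  then have m: "keys m \<subseteq> {?c..<?c + (d + 2)}" "mdeg m = t" "\<forall>k\<le>d. \<not> mdvd (shifted_gen a d ?c k) m"
    by (auto simp: std_monos_def monos_in_def)
  have "\<not> mdvd g m" if "g \<in> gens_i n d a" for g
    using that
  proof (cases rule: gens_i_cases)
    case (1 i)
    then have "i \<notin> keys m" using m(1) by auto
    then show ?thesis using 1 mdvd_var_iff[of i m] by (simp add: in_keys_iff)
  qed (use m(3) in auto)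
  moreover have "in_vars n m" using m(1) assms by (auto simp: in_vars_def)
  ultimately show "m \<in> {m. in_vars n m \<and> mdeg m = t} - multiples n (gens_i n d a)"
    using m(2) by (auto simp: multiples_def)
qed

lemma card_std_monos_eq_nmon_diff:
  assumes "d < n"
  shows "card (std_monos a d (n - (d + 1)) t)
      = nmon n t - card {m \<in> multiples n (gens_i n d a). mdeg m = t}"
proof -
  let ?All = "{m. in_vars n m \<and> mdeg m = t}"
  have "{m \<in> multiples n (gens_i n d a). mdeg m = t} = ?All \<inter> multiples n (gens_i n d a)"
    by (auto simp: multiples_def)
  then show ?thesis
    using not_in_multiples_gens_i_iff[OF assms, of t a, symmetric]
    by (simp add: card_Diff_subset_Int finite_in_vars_of_degree nmon_def)
qed

lemma e_eq_sum_a: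
  assumes "d < n"
    and a_def: "\<forall>j<n. int (a j) = (if j \<le> d then e j else 0) - (if Suc j \<le> d then e (Suc j) else 0)"
  shows "i \<le> d \<Longrightarrow> e i = int (\<Sum>j\<in>{i..d}. a j)"
proof (induction "d - i" arbitrary: i)
  case 0
  then have "i = d" by simp
  then show ?case using a_def assms(1) by simp
next
  case (Suc x)
  then have i: "i < d" "x = d - Suc i" by auto
  then have "e (Suc i) = int (\<Sum>j\<in>{Suc i..d}. a j)" using Suc.hyps(1) by simp
  moreover have "int (a i) = e i - e (Suc i)" using a_def i assms(1) by simp
  moreover have "(\<Sum>j\<in>{i..d}. a j) = a i + (\<Sum>j\<in>{Suc i..d}. a j)"
    using i by (simp add: sum.atLeast_Suc_atMost)
  ultimately show ?case by simp
qed

lemma hilbP_eq_card_std_monos: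
  assumes "d < n"
    and a_def: "\<forall>j<n. int (a j) = (if j \<le> d then e j else 0) - (if Suc j \<le> d then e (Suc j) else 0)"
    and "(\<Sum>j\<le>d. a j) \<le> t"
  shows "hilbP d e t = of_nat (card (std_monos a d (n - (d + 1)) t))"
proof -
  have "hilbP d e t = (\<Sum>i\<le>d. of_nat t + of_nat i gchoose (i + 1))
      - (\<Sum>i\<le>d. of_nat t + of_nat i - of_nat (\<Sum>j\<in>{i..d}. a j) gchoose (i + 1))"
    unfolding hilbP_def sum_subtractf[symmetric]
    by (rule sum.cong) (auto simp: e_eq_sum_a[OF assms(1,2)])
  also have "\<dots> = of_nat (card (std_monos a d (n - (d + 1)) t))"
    unfolding gbinomial_hockey_stick card_std_monos[OF assms(3)] by (simp add: add.assoc)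
  finally show ?thesis .
qed

lemma lex_ideal_eq_staircase:
  assumes dn: "d < n"
    and a_def: "\<forall>j<n. int (a j) = (if j \<le> d then e j else 0) - (if Suc j \<le> d then e (Suc j) else 0)"
  shows "lex_ideal n (hilbP d e) = (mono_ideal n (multiples n (gens_i n d a)) :: 'k::field mpoly set)"
  unfolding lex_ideal_def
proof (rule the_equality)
  let ?Ms = "multiples n (gens_i n d a)"
  let ?J = "mono_ideal n ?Ms :: 'k mpoly set"
  let ?Mt = "\<lambda>t. {m \<in> ?Ms. mdeg m = t}"
  let ?T = "\<Sum>j\<le>d. a j"
  have up: "upclosed n ?Ms"
    by (rule upclosed_multiples)
  have lex_up: "lex_upclosed n ?Ms"
    by (rule lex_upclosed_multiples[OF lex_stable_gens_i[OF dn]])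
  have vars: "\<And>m. m \<in> ?Ms \<Longrightarrow> in_vars n m"
    by (simp add: multiples_def)
  have cancel: "\<And>u k. in_vars n u \<Longrightarrow> u + single n k \<in> ?Ms \<Longrightarrow> u \<in> ?Ms"
    using multiples_cancel_var lookup_gens_i_ge[OF dn] by blast
  have hilbP: "hilbP d e t = of_nat (nmon n t - card (?Mt t))" if "?T \<le> t" for t
    using hilbP_eq_card_std_monos[OF dn a_def that] card_std_monos_eq_nmon_diff[OF dn] by simp
  have dim: "dimI ?J t = card (?Mt t)" for t
    by (rule dimI_mono_ideal[OF up])
       (rule finite_subset[OF _ finite_in_vars_of_degree[of n t]], auto simp: multiples_def)
  have "homogeneous_ideal n ?J"
    by (rule homogeneous_mono_ideal[OF up])
  moreover have "has_hilb_poly n ?J (hilbP d e)"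
    unfolding has_hilb_poly_def using hilbP by (auto simp: hilb_def dim intro!: exI[of _ ?T])
  moreover have "saturation n (lexH n ?J) = ?J"
    by (rule saturation_lexH_eq[where T = 0])
       (use up cancel in \<open>auto simp: dim toplex_lex_upclosed[OF lex_up vars]\<close>)
  ultimately show "\<exists>I. homogeneous_ideal n I \<and> has_hilb_poly n I (hilbP d e) \<and> ?J = saturation n (lexH n I)"
    by metis
  fix L :: "'k mpoly set"
  assume "\<exists>I. homogeneous_ideal n I \<and> has_hilb_poly n I (hilbP d e) \<and> L = saturation n (lexH n I)"
  then obtain I :: "'k mpoly set" and t0 where L: "L = saturation n (lexH n I)"
    and I: "\<And>t. t0 \<le> t \<Longrightarrow> of_nat (hilb n I t) = hilbP d e t"
    by (auto simp: has_hilb_poly_def)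
  have large: "toplex n t (dimI I t) = ?Mt t" if "max t0 ?T \<le> t" for t
  proof (rule toplex_of_truncated_eq[OF lex_up vars])
    have "of_nat (hilb n I t) = (of_nat (nmon n t - card (?Mt t)) :: rat)"
      using I hilbP that by simp
    then show "nmon n t - dimI I t = nmon n t - card (?Mt t)"
      by (simp add: hilb_def)
  qed
  show "L = ?J"
    unfolding L by (rule saturation_lexH_eq[where T = "max t0 ?T"]) (use up cancel large in auto)
qed

lemma lookup_Lgen:
  "lookup (Lgen n a k) i = (if i < k then a (n - 1 - i)
     else if i = k then a (n - 1 - k) + (if k < n - 1 then 1 else 0) else 0)"
  using sum_when_shift[of "\<lambda>j. a (n - 1 - j)" k 0 i]
  unfolding Lgen_def lookup_add lookup_sum lookup_single by (auto simp: when_def)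

lemma Lgen_eq_gens_i:
  assumes "d < n" "\<And>j. d < j \<Longrightarrow> j < n \<Longrightarrow> a j = 0"
  shows "{Lgen n a k | k. k < n} = gens_i n d a"
proof -
  let ?c = "n - (d + 1)"
  have var: "Lgen n a k = single k 1" if "k < ?c" for k
    by (rule poly_mapping_eqI) (use that assms in \<open>auto simp: lookup_Lgen lookup_single_if\<close>)
  have stair: "Lgen n a (?c + k) = shifted_gen a d ?c k" if "k \<le> d" for k
  proof (rule poly_mapping_eqI)
    fix i
    have "i \<ge> ?c \<Longrightarrow> n - 1 - i = d - (i - ?c)"
      using assms(1) by auto
    then show "lookup (Lgen n a (?c + k)) i = lookup (shifted_gen a d ?c k) i"
      using that assms by (auto simp: lookup_Lgen lookup_shifted_gen)
  qed
  have "{k. k < n} = {k. k < ?c} \<union> (\<lambda>k. ?c + k) ` {..d}"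
  proof (intro set_eqI iffI)
    fix x assume "x \<in> {k. k < n}"
    then show "x \<in> {k. k < ?c} \<union> (\<lambda>k. ?c + k) ` {..d}"
      using assms(1) by (cases "x < ?c") (auto simp: image_iff intro!: bexI[of _ "x - ?c"])
  qed (use assms(1) in auto)
  then have "{Lgen n a k | k. k < n} = Lgen n a ` {k. k < ?c} \<union> (\<lambda>k. Lgen n a (?c + k)) ` {..d}"
    by blast
  also have "\<dots> = gens_i n d a"
    unfolding gens_i_def Egen_eq_shifted_gen using var stair by (force simp: less_diff_conv)
  finally show ?thesis .
qed

section \<open>Minimal generators\<close>

lemma not_mdvd_at:
  assumes "0 < lookup x p" "lookup y p = 0"
  shows "\<not> mdvd x y"
proof
  assume "mdvd x y"
  from mdvd_lookup_le[OF this, of p] assms show False by simp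
qed

lemma lookup_shifted_gen_last:
  "s \<le> i \<Longrightarrow> i \<le> s + D \<Longrightarrow> lookup (shifted_gen a D s D) i = a (D - (i - s))"
  by (cases "i = s + D") (auto simp: lookup_shifted_gen)

lemma shifted_gen_not_mdvd_later:
  assumes "k' < k" "k \<le> D"
  shows "\<not> mdvd (shifted_gen a D s k') (shifted_gen a D s k)"
proof
  assume "mdvd (shifted_gen a D s k') (shifted_gen a D s k)"
  from mdvd_lookup_le[OF this, of "s + k'"] assms show False
    by (simp add: lookup_shifted_gen)
qed

lemma shifted_gen_mdvd_last_iff:
  assumes "k < D"
  shows "mdvd (shifted_gen a D s D) (shifted_gen a D s k) \<longleftrightarrow> (\<forall>j < D - k. a j = 0)"
proof
  assume dvd: "mdvd (shifted_gen a D s D) (shifted_gen a D s k)"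
  show "\<forall>j < D - k. a j = 0"
  proof (intro allI impI)
    fix j assume "j < D - k"
    then have "lookup (shifted_gen a D s k) (s + (D - j)) = 0"
      by (intro lookup_shifted_gen_beyond) simp
    moreover have "lookup (shifted_gen a D s D) (s + (D - j)) = a j"
      using \<open>j < D - k\<close> by (simp add: lookup_shifted_gen_last)
    ultimately show "a j = 0"
      using mdvd_lookup_le[OF dvd, of "s + (D - j)"] by simp
  qed
next
  assume zero: "\<forall>j < D - k. a j = 0"
  show "mdvd (shifted_gen a D s D) (shifted_gen a D s k)"
    unfolding mdvd_def
  proof
    fix i
    show "lookup (shifted_gen a D s D) i \<le> lookup (shifted_gen a D s k) i"
    proof (cases "s + k < i \<and> i \<le> s + D")
      case True
      then have "lookup (shifted_gen a D s D) i = a (D - (i - s))"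
        by (simp add: lookup_shifted_gen_last)
      moreover have "D - (i - s) < D - k"
        using True by arith
      ultimately show ?thesis using zero by simp
    qed (use assms in \<open>auto simp: lookup_shifted_gen\<close>)
  qed
qed

lemma var_mdvd_var: "mdvd (single i' (1::nat)) (single i 1) \<Longrightarrow> i' = i"
  using mdvd_lookup_le[of "single i' 1" "single i 1" i'] by (simp add: lookup_single_if split: if_splits)

lemma shifted_gen_not_mdvd_earlier:
  assumes "k < k'" "k' < D"
  shows "\<not> mdvd (shifted_gen a D s k') (shifted_gen a D s k)"
  by (rule not_mdvd_at[of _ "s + k'"]) (use assms in \<open>simp_all add: lookup_shifted_gen\<close>)

lemma var_not_mdvd_shifted_gen: "i < s \<Longrightarrow> \<not> mdvd (single i 1) (shifted_gen a D s k)"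
  by (rule not_mdvd_at[of _ i]) (simp_all add: lookup_single_if lookup_shifted_gen_below)

lemma shifted_gen_not_mdvd_var:
  assumes "i < s" "k \<le> D" "\<exists>j\<le>D. 0 < a j"
  shows "\<not> mdvd (shifted_gen a D s k) (single i 1)"
proof -
  have "\<exists>p\<ge>s. 0 < lookup (shifted_gen a D s k) p"
  proof (cases "k < D")
    case True
    then show ?thesis by (intro exI[of _ "s + k"]) (simp add: lookup_shifted_gen)
  next
    case False
    with assms(2) have "k = D" by simp
    obtain j where "j \<le> D" "0 < a j" using assms(3) by blast
    with \<open>k = D\<close> show ?thesis
      by (intro exI[of _ "s + (D - j)"]) (simp add: lookup_shifted_gen_last)
  qed
  then obtain p where "s \<le> p" "0 < lookup (shifted_gen a D s k) p" by blast
  with assms(1) show ?thesis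
    by (intro not_mdvd_at[of _ p]) (simp_all add: lookup_single_if)
qed

lemma gens_i_mdvd_cases:
  assumes "d < n" "\<exists>j\<le>d. 0 < a j"
    and g: "g \<in> gens_i n d a" and g': "g' \<in> gens_i n d a" and dvd: "mdvd g' g"
  shows "g' = g \<or> g' = shifted_gen a d (n - (d + 1)) d"
proof -
  let ?E = "shifted_gen a d (n - (d + 1))"
  from g show ?thesis
  proof (cases rule: gens_i_cases)
    case (1 i)
    from g' show ?thesis
    proof (cases rule: gens_i_cases)
      case (1 i')
      with \<open>g = single i 1\<close> dvd show ?thesis
        using var_mdvd_var by blast
    next
      case (2 k')
      have "i < n - (d + 1)"
        using \<open>i + d + 2 \<le> n\<close> by simp
      with 2 \<open>g = single i 1\<close> dvd assms(2) show ?thesis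
        using shifted_gen_not_mdvd_var[of i "n - (d + 1)" k' d a] by simp
    qed
  next
    case (2 k)
    from g' show ?thesis
    proof (cases rule: gens_i_cases)
      case (1 i)
      then have "i < n - (d + 1)"
        by simp
      with 1 \<open>g = ?E k\<close> dvd show ?thesis
        using var_not_mdvd_shifted_gen[of i "n - (d + 1)" a d k] by simp
    next
      case (2 k')
      with \<open>g = ?E k\<close> \<open>k \<le> d\<close> dvd show ?thesis
        using shifted_gen_not_mdvd_later[of k' k d a] shifted_gen_not_mdvd_earlier[of k k' d a]
        by (cases k' k rule: linorder_cases) (auto simp: le_less)
    qed
  qed
qed

lemma minimal_gens_i:
  assumes "d < n" "\<exists>j\<le>d. 0 < a j"
  shows "{g \<in> gens_i n d a. \<forall>g'\<in>gens_i n d a. mdvd g' g \<longrightarrow> g' = g}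
    = {single i 1 | i. i + d + 2 \<le> n}
      \<union> {shifted_gen a d (n - (d + 1)) k | k. k < d \<and> (\<exists>j < d - k. 0 < a j)}
      \<union> {shifted_gen a d (n - (d + 1)) d}"
    (is "?Min = ?Vars \<union> ?Stairs \<union> {?Last}")
proof
  let ?E = "shifted_gen a d (n - (d + 1))"
  show "?Min \<subseteq> ?Vars \<union> ?Stairs \<union> {?Last}"
  proof
    fix g assume "g \<in> ?Min"
    then have g: "g \<in> gens_i n d a" and min: "\<And>g'. g' \<in> gens_i n d a \<Longrightarrow> mdvd g' g \<Longrightarrow> g' = g"
      by auto
    have last: "?E d \<in> gens_i n d a"
      by (auto simp: gens_i_def Egen_eq_shifted_gen)
    from g show "g \<in> ?Vars \<union> ?Stairs \<union> {?Last}"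
    proof (cases rule: gens_i_cases)
      case (2 k)
      show ?thesis
      proof (cases "k < d \<and> (\<forall>j < d - k. a j = 0)")
        case True
        then have "mdvd (?E d) g"
          using shifted_gen_mdvd_last_iff 2 by simp
        then have "?E d = g" by (rule min[OF last])
        moreover have "\<not> mdvd g (?E d)"
          using True 2 shifted_gen_not_mdvd_later[of k d d a "n - (d + 1)"] by simp
        ultimately show ?thesis by (simp add: mdvd_refl)
      qed (use 2 in auto)
    qed auto
  qed
  show "?Vars \<union> ?Stairs \<union> {?Last} \<subseteq> ?Min"
  proof
    fix g assume g: "g \<in> ?Vars \<union> ?Stairs \<union> {?Last}"
    then have g_gen: "g \<in> gens_i n d a"
      by (auto simp: gens_i_def Egen_eq_shifted_gen)
    have "\<not> mdvd (?E d) g" if "g \<noteq> ?E d"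
    proof -
      consider (var) i where "i + d + 2 \<le> n" "g = single i 1"
        | (stair) k j where "k < d" "j < d - k" "0 < a j" "g = ?E k"
        using g \<open>g \<noteq> ?E d\<close> by blast
      then show ?thesis
      proof cases
        case var
        then have "i < n - (d + 1)" by simp
        with var show ?thesis
          using shifted_gen_not_mdvd_var[of i "n - (d + 1)" d d a] assms(2) by simp
      next
        case stair
        then show ?thesis using shifted_gen_mdvd_last_iff[of k d a] by auto
      qed
    qed
    then have "g' = g" if "g' \<in> gens_i n d a" "mdvd g' g" for g'
      using gens_i_mdvd_cases[OF assms g_gen that] that(2) by auto
    with g_gen show "g \<in> ?Min" by blast
  qed
qed

lemma shifted_gen_last_eq_sum: "shifted_gen a D s D = (\<Sum>j\<le>D. single (s + j) (a (D - j)))"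
  by (simp add: shifted_gen_def lessThan_Suc_atMost[symmetric])

lemma minimal_gens_i_eq_gens_ii:
  assumes "d < n" "l + 1 \<le> d" "\<forall>j\<le>l. a j = 0" "0 < a (l + 1)"
  shows "{g \<in> gens_i n d a. \<forall>g'\<in>gens_i n d a. mdvd g' g \<longrightarrow> g' = g} = gens_ii n d a l"
proof -
  let ?c = "n - (d + 1)"
  have "(\<exists>j < d - k. 0 < a j) \<longleftrightarrow> k + l + 2 \<le> d" for k
  proof
    assume "\<exists>j < d - k. 0 < a j"
    then obtain j where "j < d - k" "0 < a j" by blast
    with assms(3) have "l < j" by (metis not_le neq0_conv)
    with \<open>j < d - k\<close> show "k + l + 2 \<le> d" by simp
  qed (use assms(4) in \<open>intro exI[of _ "l + 1"], simp\<close>)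
  then have stairs: "{shifted_gen a d ?c k | k. k < d \<and> (\<exists>j < d - k. 0 < a j)}
      = {Egen n d a k | k. k + l + 2 \<le> d}"
    by (auto simp: Egen_eq_shifted_gen)
  have "(\<Sum>j\<le>d. single (?c + j) (a (d - j))) = (\<Sum>j\<le>d - (l + 1). single (?c + j) (a (d - j)))"
  proof (rule sum.mono_neutral_right)
    show "\<forall>i\<in>{..d} - {..d - (l + 1)}. single (?c + i) (a (d - i)) = 0"
    proof
      fix i assume "i \<in> {..d} - {..d - (l + 1)}"
      then have "d - i \<le> l" by auto
      then show "single (?c + i) (a (d - i)) = 0" by (simp add: assms(3))
    qed
  qed auto
  then have last: "shifted_gen a d ?c d = (\<Sum>j\<le>d - (l + 1). single (?c + j) (a (d - j)))"
    by (simp add: shifted_gen_last_eq_sum)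
  have "\<exists>j\<le>d. 0 < a j"
    using assms(2,4) by blast
  then show ?thesis
    unfolding gens_ii_def stairs[symmetric] last[symmetric] by (rule minimal_gens_i[OF assms(1)])
qed

lemma minimal_gens_i_eq_gens_i:
  assumes "d < n" "a 0 \<noteq> 0"
  shows "{g \<in> gens_i n d a. \<forall>g'\<in>gens_i n d a. mdvd g' g \<longrightarrow> g' = g} = gens_i n d a"
proof -
  let ?E = "shifted_gen a d (n - (d + 1))"
  have nonzero: "\<exists>j\<le>d. 0 < a j"
    using assms(2) by blast
  have stairs: "{?E k | k. k < d \<and> (\<exists>j < d - k. 0 < a j)} \<union> {?E d} = {Egen n d a k | k. k \<le> d}"
  proof -
    have "(\<exists>j < d - k. 0 < a j)" if "k < d" for k
      using that assms(2) by (intro exI[of _ 0]) simp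
    then have "{?E k | k. k < d \<and> (\<exists>j < d - k. 0 < a j)} = ?E ` {..<d}"
      by blast
    moreover have "{Egen n d a k | k. k \<le> d} = ?E ` {..d}"
      unfolding Egen_eq_shifted_gen by blast
    ultimately show ?thesis
      by (simp add: lessThan_Suc_atMost[symmetric] lessThan_Suc Un_commute)
  qed
  have "{g \<in> gens_i n d a. \<forall>g'\<in>gens_i n d a. mdvd g' g \<longrightarrow> g' = g}
      = {single i 1 | i. i + d + 2 \<le> n} \<union> {?E k | k. k < d \<and> (\<exists>j < d - k. 0 < a j)} \<union> {?E d}"
    by (rule minimal_gens_i[OF assms(1) nonzero])
  also have "\<dots> = gens_i n d a"
    unfolding gens_i_def stairs[symmetric] by (simp only: Un_assoc)
  finally show ?thesis .
qed

theorem lemma3p3: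
  fixes d n :: nat and e :: "nat \<Rightarrow> int" and a :: "nat \<Rightarrow> nat"
  assumes e_mono: "\<forall>i<d. e (Suc i) \<le> e i"
    and e_pos: "e d > 0"
    and n_gt: "n > d"
    and a_def: "\<forall>j<n. int (a j) = (if j \<le> d then e j else 0) - (if Suc j \<le> d then e (Suc j) else 0)"
  shows "((lex_ideal n (hilbP d e) :: 'k::alg_closed_field mpoly set) = Lideal n a
          \<and> (Lideal n a :: 'k mpoly set) = gen_ideal n (mon ` gens_i n d a))
       \<and> (\<forall>l. l + 1 \<le> d \<and> (\<forall>j\<le>l. a j = 0) \<and> a (l + 1) > 0 \<longrightarrow>
            mingens n (lex_ideal n (hilbP d e) :: 'k mpoly set) = gens_ii n d a l)
       \<and> (a 0 \<noteq> 0 \<longrightarrow> mingens n (lex_ideal n (hilbP d e) :: 'k mpoly set) = gens_i n d a)"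
proof -
  have vars: "\<And>g. g \<in> gens_i n d a \<Longrightarrow> in_vars n g"
    using in_vars_gens_i[OF n_gt] .
  have lex: "(lex_ideal n (hilbP d e) :: 'k mpoly set) = mono_ideal n (multiples n (gens_i n d a))"
    by (rule lex_ideal_eq_staircase[OF n_gt a_def])
  have gen: "(gen_ideal n (mon ` gens_i n d a) :: 'k mpoly set) = mono_ideal n (multiples n (gens_i n d a))"
    by (rule gen_ideal_mon_eq[OF vars])
  have "a j = 0" if "d < j" "j < n" for j
    using a_def that by auto
  then have "(Lideal n a :: 'k mpoly set) = gen_ideal n (mon ` gens_i n d a)"
    unfolding Lideal_def by (simp add: Lgen_eq_gens_i[OF n_gt])
  moreover have "mingens n (lex_ideal n (hilbP d e) :: 'k mpoly set)
      = {g \<in> gens_i n d a. \<forall>g'\<in>gens_i n d a. mdvd g' g \<longrightarrow> g' = g}"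
    unfolding lex by (rule mingens_mono_ideal_multiples[OF vars])
  ultimately show ?thesis
    using lex gen minimal_gens_i_eq_gens_ii[OF n_gt] minimal_gens_i_eq_gens_i[OF n_gt] by simp
qed

end
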